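(* Let $f$ be a $\mathbf{\Sigma}$-piecewise linear function on $N_{\mathbb{R}}$ and $\mathcal L=\sum_{i=1}^n f(v_i)E_i\in\mathrm{Pic}_{\mathbb{R}}(\mathbb{P}_{\mathbf{\Sigma}})$. Let $s\in\{1,\dots,n\}$. Then there exists a $\mathbf{\Sigma}$-piecewise linear function $g$ on $N_{\mathbb{R}}$ such that: (i) $\mathcal L=\sum_{i=1}^n g(v_i)E_i$ in $\mathrm{Pic}_{\mathbb{R}}(\mathbb{P}_{\mathbf{\Sigma}})$; (ii) $g(v_s)=0$; (iii) $g(v_i)\ne0$ for every $i$ with $v_i\notin\mathbb{R}v_s$; (iv) if $t\ne s$ and $v_t\in\mathbb{R}v_s$, then $g(v_t)=0$ if and only if the restriction of $f$ to the line $\mathbb{R}v_s$ is linear.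
   Context: $N$ is a lattice of rank $m$, $M=\mathrm{Hom}(N,\mathbb{Z})$, $N_{\mathbb{R}}=N\otimes\mathbb{R}$, $M_{\mathbb{R}}=M\otimes\mathbb{R}$; $\Sigma$ is a complete simplicial fan in $N_{\mathbb{R}}$ with $n$ rays and $v_i\in N$ a nonzero lattice point on the $i$-th ray ($\mathbf{\Sigma}=(\Sigma,\{v_i\})$), with associated toric DM stack $\mathbb{P}_{\mathbf{\Sigma}}$. $\mathrm{Pic}_{\mathbb{R}}(\mathbb{P}_{\mathbf{\Sigma}})=\mathrm{Pic}(\mathbb{P}_{\mathbf{\Sigma}})\otimes\mathbb{R}$ is identified with $\mathbb{R}^n/\{\sum_i w(v_i)E_i:w\in M_{\mathbb{R}}\}$, where $E_1,\dots,E_n$ is the standard basis of $\mathbb{R}^n$. A $\mathbf{\Sigma}$-piecewise linear function is a continuous function $N_{\mathbb{R}}\to\mathbb{R}$ whose restriction to each cone of $\Sigma$ is linear. *)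

theory Defs
  imports "HOL-Analysis.Analysis"
begin

text \<open>N = Z^m inside N_R = real^'m (after choosing a basis); M_R is identified with
  real^'m via the inner product, so w(v) = w \<bullet> v. Rays are indexed by {..<n}.\<close>

definition lattice_vecs :: "nat \<Rightarrow> (nat \<Rightarrow> real^'m) \<Rightarrow> bool" where
  "lattice_vecs n v \<longleftrightarrow> (\<forall>i<n. \<forall>j. v i $ j \<in> \<int>)"

definition cone_of :: "(nat \<Rightarrow> real^'m) \<Rightarrow> nat set \<Rightarrow> (real^'m) set" where
  "cone_of v \<sigma> = {x. \<exists>c. (\<forall>i\<in>\<sigma>. c i \<ge> 0) \<and> x = (\<Sum>i\<in>\<sigma>. c i *\<^sub>R v i)}"

text \<open>A complete simplicial fan with rays v 0, ..., v (n-1): a simplicial cone is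
  determined by the set of rays spanning it, so the fan is a set Sig of index sets.\<close>
definition complete_simplicial_fan ::
  "nat \<Rightarrow> (nat \<Rightarrow> real^'m) \<Rightarrow> nat set set \<Rightarrow> bool" where
  "complete_simplicial_fan n v Sig \<longleftrightarrow>
     (\<forall>\<sigma>\<in>Sig. \<sigma> \<subseteq> {..<n}) \<and>
     (\<forall>\<sigma>\<in>Sig. inj_on v \<sigma> \<and> independent (v ` \<sigma>)) \<and>
     (\<forall>\<sigma>\<in>Sig. \<forall>\<tau>. \<tau> \<subseteq> \<sigma> \<longrightarrow> \<tau> \<in> Sig) \<and>
     (\<forall>i<n. {i} \<in> Sig) \<and>
     (\<forall>\<sigma>\<in>Sig. \<forall>\<tau>\<in>Sig. cone_of v \<sigma> \<inter> cone_of v \<tau> = cone_of v (\<sigma> \<inter> \<tau>)) \<and>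
     (\<Union>\<sigma>\<in>Sig. cone_of v \<sigma>) = UNIV"

definition sigma_pl :: "(nat \<Rightarrow> real^'m) \<Rightarrow> nat set set \<Rightarrow> (real^'m \<Rightarrow> real) \<Rightarrow> bool" where
  "sigma_pl v Sig f \<longleftrightarrow> continuous_on UNIV f \<and>
     (\<forall>\<sigma>\<in>Sig. \<exists>l. linear l \<and> (\<forall>x\<in>cone_of v \<sigma>. f x = l x))"

text \<open>Equality of sum_i a_i E_i and sum_i b_i E_i in Pic_R = R^n / {(w(v_i))_i}.\<close>
definition pic_eq :: "nat \<Rightarrow> (nat \<Rightarrow> real^'m) \<Rightarrow> (nat \<Rightarrow> real) \<Rightarrow> (nat \<Rightarrow> real) \<Rightarrow> bool" where
  "pic_eq n v a b \<longleftrightarrow> (\<exists>w::real^'m. \<forall>i<n. a i - b i = w \<bullet> v i)"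

definition linear_on :: "(real^'m) set \<Rightarrow> (real^'m \<Rightarrow> real) \<Rightarrow> bool" where
  "linear_on S f \<longleftrightarrow> (\<exists>l. linear l \<and> (\<forall>x\<in>S. f x = l x))"

end

theory Submission
  imports Defs
begin

text \<open>Replacing f by \<open>g = f - w\<close> for a linear form w changes neither piecewise linearity nor the class of
  \<open>\<Sum> f(v\<^sub>i) E\<^sub>i\<close>, so it suffices to choose w with \<open>w(v\<^sub>s) = f(v\<^sub>s)\<close> and
  \<open>w(v\<^sub>i) \<noteq> f(v\<^sub>i)\<close> for the finitely many rays off the line \<open>\<real>v\<^sub>s\<close>; such w exist because
  each of these conditions only removes a proper affine hyperplane. A ray \<open>v\<^sub>t\<close> on the line is
  \<open>c v\<^sub>s\<close> with \<open>c < 0\<close>, and f, being linear on both half-lines, is linear on the line iff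
  \<open>f(v\<^sub>t) = c f(v\<^sub>s)\<close>, i.e. iff \<open>g(v\<^sub>t) = 0\<close>.\<close>

lemma exists_orthogonal_not_orthogonal:
  fixes a u :: "'a::real_inner"
  assumes "u \<notin> span {a}"
  obtains d where "d \<bullet> a = 0" "d \<bullet> u \<noteq> 0"
proof -
  define d where "d = u - ((u \<bullet> a) / (a \<bullet> a)) *\<^sub>R a"
  have "d \<bullet> a = 0"
    by (cases "a = 0") (simp_all add: d_def inner_diff_left)
  moreover have "d \<noteq> 0"
    using assms span_singleton[of a] by (auto simp: d_def)
  moreover have "d \<bullet> u = d \<bullet> d"
    using \<open>d \<bullet> a = 0\<close> by (simp add: d_def inner_diff_right)
  ultimately show thesis using that by simp
qed

lemma exists_inner_avoiding:
  fixes a :: "'a::real_inner" and u :: "'i \<Rightarrow> 'a"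
  assumes "finite I" and "\<forall>i\<in>I. u i \<notin> span {a}" and "w0 \<bullet> a = c"
  shows "\<exists>w. w \<bullet> a = c \<and> (\<forall>i\<in>I. w \<bullet> u i \<noteq> b i)"
  using assms(1,2)
proof (induction I rule: finite_induct)
  case empty
  then show ?case using assms(3) by auto
next
  case (insert j F)
  then obtain w where w: "w \<bullet> a = c" "\<forall>i\<in>F. w \<bullet> u i \<noteq> b i" by auto
  obtain d where d: "d \<bullet> a = 0" "d \<bullet> u j \<noteq> 0"
    using exists_orthogonal_not_orthogonal insert.prems by blast
  \<comment> \<open>moving w along d keeps \<open>w \<bullet> a\<close>; only finitely many step lengths are forbidden\<close>
  define bad where "bad = (\<lambda>i. (b i - w \<bullet> u i) / (d \<bullet> u i)) ` insert j F"
  have "finite bad" using insert.hyps(1) by (simp add: bad_def)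
  then obtain e :: real where e: "e \<notin> bad"
    using ex_new_if_finite[OF infinite_UNIV_char_0] by blast
  have "(w + e *\<^sub>R d) \<bullet> u i \<noteq> b i" if "i \<in> insert j F" for i
  proof (cases "d \<bullet> u i = 0")
    case True
    then show ?thesis using that w d by (auto simp: inner_add_left)
  next
    case False
    have "e \<noteq> (b i - w \<bullet> u i) / (d \<bullet> u i)" using e that by (auto simp: bad_def)
    then show ?thesis using False by (auto simp: inner_add_left field_simps)
  qed
  then show ?case using w d by (intro exI[of _ "w + e *\<^sub>R d"]) (simp add: inner_add_left)
qed

lemma linear_on_line_iff:
  fixes f :: "real^'m \<Rightarrow> real"
  assumes "a \<noteq> 0" and "c < 0"
    and hom_a: "\<And>y. y \<ge> 0 \<Longrightarrow> f (y *\<^sub>R a) = y * f a"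
    and hom_ca: "\<And>y. y \<ge> 0 \<Longrightarrow> f (y *\<^sub>R (c *\<^sub>R a)) = y * f (c *\<^sub>R a)"
  shows "linear_on (span {a}) f \<longleftrightarrow> f (c *\<^sub>R a) = c * f a"
proof
  assume "linear_on (span {a}) f"
  then obtain l where "linear l" "\<forall>x\<in>span {a}. f x = l x"
    unfolding linear_on_def by blast
  then show "f (c *\<^sub>R a) = c * f a"
    by (simp add: span_base span_mul linear_cmul)
next
  assume neg: "f (c *\<^sub>R a) = c * f a"
  define l where "l x = (x \<bullet> a) / (a \<bullet> a) * f a" for x
  have "linear l"
    unfolding linear_iff l_def by (auto simp: inner_add_left add_divide_distrib algebra_simps)
  moreover have "f (k *\<^sub>R a) = l (k *\<^sub>R a)" for k
  proof (cases "k \<ge> 0")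
    case True
    then show ?thesis using hom_a \<open>a \<noteq> 0\<close> by (simp add: l_def)
  next
    case False
    then have "k / c \<ge> 0" using \<open>c < 0\<close> by (simp add: divide_nonpos_neg)
    then have "f ((k / c) *\<^sub>R (c *\<^sub>R a)) = (k / c) * f (c *\<^sub>R a)"
      by (rule hom_ca)
    then have "f (k *\<^sub>R a) = k * f a"
      using neg \<open>c < 0\<close> by simp
    then show ?thesis using \<open>c < 0\<close> \<open>a \<noteq> 0\<close> by (simp add: l_def)
  qed
  ultimately show "linear_on (span {a}) f"
    unfolding linear_on_def span_singleton by blast
qed

lemma cone_of_singleton: "cone_of v {i} = {y *\<^sub>R v i | y. y \<ge> 0}"
  unfolding cone_of_def by auto

lemma fan_singleton:
  assumes "complete_simplicial_fan n v Sig" and "i < n"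
  shows "{i} \<in> Sig"
  using assms unfolding complete_simplicial_fan_def by blast

lemma fan_ray_nonzero:
  assumes "complete_simplicial_fan n v Sig" and "i < n"
  shows "v i \<noteq> 0"
  using assms fan_singleton[OF assms] unfolding complete_simplicial_fan_def
  by (metis image_empty image_insert dependent_zero insertI1)

text \<open>The cones of two distinct rays meet only in 0.\<close>
lemma fan_collinear_rays_opposite:
  assumes fan: "complete_simplicial_fan n v Sig" and "i < n" "j < n" "i \<noteq> j"
    and "v j = c *\<^sub>R v i"
  shows "c < 0"
proof (rule ccontr)
  assume "\<not> c < 0"
  then have "v j \<in> cone_of v {i} \<inter> cone_of v {j}"
    using \<open>v j = c *\<^sub>R v i\<close> by (force simp: cone_of_singleton)
  also have "\<dots> = cone_of v ({i} \<inter> {j})"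
    using fan fan_singleton[OF fan] assms(2,3) unfolding complete_simplicial_fan_def by blast
  also have "\<dots> = {0}"
    using \<open>i \<noteq> j\<close> by (simp add: cone_of_def)
  finally show False using fan_ray_nonzero[OF fan \<open>j < n\<close>] by simp
qed

lemma sigma_pl_ray_homogeneous:
  assumes "complete_simplicial_fan n v Sig" and "sigma_pl v Sig f" and "i < n" and "y \<ge> 0"
  shows "f (y *\<^sub>R v i) = y * f (v i)"
proof -
  obtain l where "linear l" and l: "\<forall>x\<in>cone_of v {i}. f x = l x"
    using assms fan_singleton unfolding sigma_pl_def by blast
  have "f (x *\<^sub>R v i) = l (x *\<^sub>R v i)" if "x \<ge> 0" for x
    using l that by (auto simp: cone_of_singleton)
  from this[of y] this[of 1] \<open>y \<ge> 0\<close> show ?thesis by (simp add: linear_cmul[OF \<open>linear l\<close>])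
qed

lemma sigma_pl_diff_inner:
  assumes "sigma_pl v Sig f"
  shows "sigma_pl v Sig (\<lambda>x. f x - w \<bullet> x)"
  unfolding sigma_pl_def
proof (intro conjI ballI)
  show "continuous_on UNIV (\<lambda>x. f x - w \<bullet> x)"
    using assms unfolding sigma_pl_def by (intro continuous_intros) auto
next
  fix \<sigma> assume "\<sigma> \<in> Sig"
  then obtain l where "linear l" "\<forall>x\<in>cone_of v \<sigma>. f x = l x"
    using assms unfolding sigma_pl_def by blast
  moreover have "linear (\<lambda>x. l x - w \<bullet> x)"
    using \<open>linear l\<close> by (intro linear_compose_sub bounded_linear.linear[OF bounded_linear_inner_right])
  ultimately show "\<exists>l. linear l \<and> (\<forall>x\<in>cone_of v \<sigma>. f x - w \<bullet> x = l x)"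
    by auto
qed

theorem lemma4p1:
  fixes n :: nat and v :: "nat \<Rightarrow> real^'m" and Sig :: "nat set set"
    and f :: "real^'m \<Rightarrow> real" and s :: nat
  assumes "complete_simplicial_fan n v Sig" and "lattice_vecs n v"
    and "sigma_pl v Sig f" and "s < n"
  shows "\<exists>g. sigma_pl v Sig g \<and>
           pic_eq n v (\<lambda>i. f (v i)) (\<lambda>i. g (v i)) \<and>
           g (v s) = 0 \<and>
           (\<forall>i<n. v i \<notin> span {v s} \<longrightarrow> g (v i) \<noteq> 0) \<and>
           (\<forall>t<n. t \<noteq> s \<and> v t \<in> span {v s} \<longrightarrow>
               (g (v t) = 0 \<longleftrightarrow> linear_on (span {v s}) f))"
proof -
  note fan = assms(1) and pl = assms(3)
  have w0: "((f (v s) / (v s \<bullet> v s)) *\<^sub>R v s) \<bullet> v s = f (v s)"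
    using fan_ray_nonzero[OF fan \<open>s < n\<close>] by simp
  have "\<exists>w. w \<bullet> v s = f (v s) \<and>
      (\<forall>i\<in>{i. i < n \<and> v i \<notin> span {v s}}. w \<bullet> v i \<noteq> f (v i))"
    by (rule exists_inner_avoiding[OF _ _ w0]) auto
  then obtain w where w_s: "w \<bullet> v s = f (v s)"
    and w_off: "\<forall>i<n. v i \<notin> span {v s} \<longrightarrow> w \<bullet> v i \<noteq> f (v i)"
    by auto
  define g where "g x = f x - w \<bullet> x" for x
  have "g (v t) = 0 \<longleftrightarrow> linear_on (span {v s}) f"
    if "t < n" "t \<noteq> s" "v t \<in> span {v s}" for t
  proof -
    obtain c where c: "v t = c *\<^sub>R v s" using \<open>v t \<in> span {v s}\<close> by (auto simp: span_singleton)
    have "c < 0"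
      using fan_collinear_rays_opposite[OF fan \<open>s < n\<close> \<open>t < n\<close> \<open>t \<noteq> s\<close>[symmetric] c] .
    have "f (y *\<^sub>R (c *\<^sub>R v s)) = y * f (c *\<^sub>R v s)" if "y \<ge> 0" for y
      unfolding c[symmetric] using sigma_pl_ray_homogeneous[OF fan pl \<open>t < n\<close> that] .
    then have "linear_on (span {v s}) f \<longleftrightarrow> f (c *\<^sub>R v s) = c * f (v s)"
      by (intro linear_on_line_iff fan_ray_nonzero[OF fan \<open>s < n\<close>] \<open>c < 0\<close>
          sigma_pl_ray_homogeneous[OF fan pl \<open>s < n\<close>])
    then show ?thesis using c w_s by (simp add: g_def)
  qed
  moreover have "sigma_pl v Sig g"
    unfolding g_def using pl by (rule sigma_pl_diff_inner)
  moreover have "pic_eq n v (\<lambda>i. f (v i)) (\<lambda>i. g (v i))"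
    unfolding pic_eq_def g_def by (auto simp: inner_commute)
  moreover have "g (v s) = 0" and "\<forall>i<n. v i \<notin> span {v s} \<longrightarrow> g (v i) \<noteq> 0"
    using w_s w_off by (auto simp: g_def)
  ultimately show ?thesis by (intro exI[of _ g]) blast
qed

end
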